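(* For every prime $p>7$, $$H_{\frac{p-1}{2}}^{(3)}\equiv 6\,\frac{H_{p-1}}{p^2}-\frac{81}{10}\,p^2B_{p-5}\pmod{p^3}.$$
   Context: $H_n^{(r)}=\sum_{j=1}^n j^{-r}$, $H_n=H_n^{(1)}$ (for $p>3$, $H_{p-1}/p^2$ is $p$-integral). Bernoulli numbers: $\sum_{n\ge0}B_nt^n/n!=t/(e^t-1)$. Congruences are between $p$-adic integers. *)

theory Defs
  imports "HOL-Computational_Algebra.Computational_Algebra"
begin

definition harm :: "nat \<Rightarrow> nat \<Rightarrow> rat" where
  "harm r n = (\<Sum>j=1..n. 1 / (of_nat j) ^ r)"

definition bernoulli :: "nat \<Rightarrow> rat" where
  "bernoulli n = fact n * fps_nth (fps_X / (fps_exp 1 - 1)) n"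

definition p_integral :: "nat \<Rightarrow> rat \<Rightarrow> bool" where
  "p_integral p x \<longleftrightarrow> \<not> int p dvd snd (quotient_of x)"

definition padic_cong :: "nat \<Rightarrow> nat \<Rightarrow> rat \<Rightarrow> rat \<Rightarrow> bool" where
  "padic_cong p k x y \<longleftrightarrow> p_integral p ((x - y) / (of_nat p) ^ k)"

end

theory Submission
  imports Defs "HOL-Number_Theory.Residues"
begin

text \<open>Write p = 2n + 1 and H^(r) for the harmonic sums. Pairing j with p - j, and 2i with
p - 2i, writes both H^(1)_(p-1) and H^(4)_(p-1) in two ways as sums over 1 <= i <= n. Expanding
1/(p - i)^k in powers of p, the coefficients -27/20 and 4/5 are chosen so that
  1/i^3 - 27/20 p^2/i^5 + (2 (1/i + 1/(p-i)) - 8 (1/(2i) + 1/(p-2i))) / p^2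
    + 4/5 p ((1/i^4 + 1/(p-i)^4) - (1/(2i)^4 + 1/(p-2i)^4))
is exactly p^3 times a rational function of p and i whose denominator is prime to p.
Summing over i, the H^(4) terms cancel and
  H^(3)_n \<equiv> 6 H^(1)_(p-1)/p^2 + 27/20 p^2 H^(5)_n (mod p^3).
Finally H^(5)_n \<equiv> -6 B_(p-5) (mod p): by Fermat, H^(5)_n is the power sum of the j^(p-6),
which Faulhaber's formula expresses through the Bernoulli polynomial B_(p-5) at
n + 1 \<equiv> 1/2 (mod p), and B_m(1/2) = (2^(1-m) - 1) B_m.\<close>

section \<open>Congruences between \<open>p\<close>-integral rationals\<close>

lemma p_integral_iff:
  "p_integral p x \<longleftrightarrow> (\<exists>a b. \<not> int p dvd b \<and> x = of_int a / of_int b)"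
proof
  assume "p_integral p x"
  obtain a b where q: "quotient_of x = (a, b)" by (cases "quotient_of x")
  with \<open>p_integral p x\<close> show "\<exists>a b. \<not> int p dvd b \<and> x = of_int a / of_int b"
    unfolding p_integral_def using quotient_of_div[OF q] by auto
next
  assume "\<exists>a b. \<not> int p dvd b \<and> x = of_int a / of_int b"
  then obtain a b where b: "\<not> int p dvd b" and x: "x = of_int a / of_int b" by blast
  obtain c d where q: "quotient_of x = (c, d)" by (cases "quotient_of x")
  have "d > 0" "coprime c d" using q by (rule quotient_of_denom_pos, rule quotient_of_coprime)
  have "b \<noteq> 0" using b by auto
  have "of_int a / of_int b = (of_int c / of_int d :: rat)"
    using quotient_of_div[OF q] x by simp
  with \<open>b \<noteq> 0\<close> \<open>d > 0\<close> have "a * d = c * b"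
    by (simp add: field_simps flip: of_int_mult)
  then have "d dvd b"
    using \<open>coprime c d\<close> by (metis coprime_commute coprime_dvd_mult_right_iff dvd_triv_right)
  with b have "\<not> int p dvd d" using dvd_trans by blast
  then show "p_integral p x" unfolding p_integral_def q by simp
qed

context
  fixes p :: nat
  assumes p_prime: "prime p"
begin

lemma p_integral_of_int [simp]: "p_integral p (of_int a)"
  using p_prime unfolding p_integral_iff by (intro exI[of _ a] exI[of _ 1]) auto

lemma p_integral_of_nat [simp]: "p_integral p (of_nat a)"
  using p_integral_of_int[of "int a"] by simp

lemma p_integral_numeral [simp]: "p_integral p (numeral a)"
  using p_integral_of_nat[of "numeral a"] by simp

lemma p_integral_0 [simp]: "p_integral p 0"
  using p_integral_of_nat[of 0] by simp

lemma p_integral_1 [simp]: "p_integral p 1"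
  using p_integral_of_nat[of 1] by simp

lemma p_integral_add [intro]:
  assumes "p_integral p x" "p_integral p y"
  shows "p_integral p (x + y)"
proof -
  obtain a b c d where "\<not> int p dvd b" "x = of_int a / of_int b"
    and "\<not> int p dvd d" "y = of_int c / of_int d"
    using assms unfolding p_integral_iff by blast
  moreover from this have "b \<noteq> 0" "d \<noteq> 0" by auto
  ultimately show ?thesis unfolding p_integral_iff using p_prime
    by (intro exI[of _ "a * d + c * b"] exI[of _ "b * d"])
       (simp add: prime_dvd_mult_iff field_simps)
qed

lemma p_integral_mult [intro]:
  assumes "p_integral p x" "p_integral p y"
  shows "p_integral p (x * y)"
proof -
  obtain a b c d where "\<not> int p dvd b" "x = of_int a / of_int b"
    and "\<not> int p dvd d" "y = of_int c / of_int d"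
    using assms unfolding p_integral_iff by blast
  then show ?thesis unfolding p_integral_iff using p_prime
    by (intro exI[of _ "a * c"] exI[of _ "b * d"]) (simp add: prime_dvd_mult_iff)
qed

lemma p_integral_uminus [intro]: "p_integral p x \<Longrightarrow> p_integral p (- x)"
  using p_integral_mult[OF p_integral_of_int[of "- 1"], of x] by simp

lemma p_integral_diff [intro]: "p_integral p x \<Longrightarrow> p_integral p y \<Longrightarrow> p_integral p (x - y)"
  using p_integral_add[of x "- y"] by auto

lemma p_integral_sum [intro]: "(\<And>i. i \<in> I \<Longrightarrow> p_integral p (f i)) \<Longrightarrow> p_integral p (sum f I)"
  by (induction I rule: infinite_finite_induct) auto

lemma p_integral_power [intro]: "p_integral p x \<Longrightarrow> p_integral p (x ^ k)"
  by (induction k) auto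

lemma p_integral_divide_of_nat [intro]:
  assumes "p_integral p x" "\<not> p dvd m"
  shows "p_integral p (x / of_nat m)"
proof -
  obtain a b where "\<not> int p dvd b" "x = of_int a / of_int b"
    using assms(1) unfolding p_integral_iff by blast
  with assms(2) show ?thesis unfolding p_integral_iff using p_prime
    by (intro exI[of _ a] exI[of _ "b * int m"]) (simp add: prime_dvd_mult_iff)
qed

lemma p_integral_inverse_of_nat [intro]: "\<not> p dvd m \<Longrightarrow> p_integral p (1 / of_nat m)"
  by (rule p_integral_divide_of_nat) simp_all

lemma padic_cong_iff:
  "padic_cong p k x y \<longleftrightarrow> (\<exists>r. p_integral p r \<and> x = y + of_nat p ^ k * r)"
  using p_prime unfolding padic_cong_def
  by (auto intro!: exI[of _ "(x - y) / of_nat p ^ k"] simp: prime_gt_0_nat)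

lemma padic_congI: "p_integral p r \<Longrightarrow> x = y + of_nat p ^ k * r \<Longrightarrow> padic_cong p k x y"
  unfolding padic_cong_iff by blast

lemma padic_cong_refl [simp]: "padic_cong p k x x"
  by (rule padic_congI[of 0]) simp_all

lemma padic_cong_sym:
  assumes "padic_cong p k x y"
  shows "padic_cong p k y x"
proof -
  obtain r where "p_integral p r" "x = y + of_nat p ^ k * r"
    using assms unfolding padic_cong_iff by blast
  then show ?thesis by (intro padic_congI[of "- r"]) auto
qed

lemma padic_cong_trans:
  assumes "padic_cong p k x y" "padic_cong p k y z"
  shows "padic_cong p k x z"
  using assms unfolding padic_cong_iff by (auto simp: algebra_simps)

lemma padic_cong_add:
  assumes "padic_cong p k x y" "padic_cong p k u v"
  shows "padic_cong p k (x + u) (y + v)"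
  using assms unfolding padic_cong_iff by (auto simp: algebra_simps)

lemma padic_cong_diff:
  assumes "padic_cong p k x y" "padic_cong p k u v"
  shows "padic_cong p k (x - u) (y - v)"
  using assms unfolding padic_cong_iff by (auto simp: algebra_simps)

lemma padic_cong_mult:
  assumes "padic_cong p k x y" "padic_cong p k u v" "p_integral p x" "p_integral p v"
  shows "padic_cong p k (x * u) (y * v)"
proof -
  obtain r s where "p_integral p r" "x = y + of_nat p ^ k * r"
    and "p_integral p s" "u = v + of_nat p ^ k * s"
    using assms(1,2) unfolding padic_cong_iff by blast
  moreover from this have "x * u = y * v + of_nat p ^ k * (x * s + r * v)"
    by (simp add: algebra_simps)
  ultimately show ?thesis
    using assms(3,4) by (intro padic_congI[of "x * s + r * v"]) auto
qed

lemma padic_cong_mult_left: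
  assumes "p_integral p c" "padic_cong p k x y"
  shows "padic_cong p k (c * x) (c * y)"
proof -
  obtain r where "p_integral p r" "x = y + of_nat p ^ k * r"
    using assms(2) unfolding padic_cong_iff by blast
  with assms(1) show ?thesis
    by (intro padic_congI[of "c * r"]) (auto simp: algebra_simps)
qed

lemma padic_cong_sum:
  "(\<And>i. i \<in> I \<Longrightarrow> padic_cong p k (f i) (g i)) \<Longrightarrow> padic_cong p k (sum f I) (sum g I)"
  by (induction I rule: infinite_finite_induct) (auto intro: padic_cong_add)

lemma padic_cong_power:
  assumes "padic_cong p k x y" "p_integral p x" "p_integral p y"
  shows "padic_cong p k (x ^ j) (y ^ j)"
  by (induction j) (use assms in \<open>auto intro!: padic_cong_mult\<close>)

lemma padic_cong_inverse:
  assumes "padic_cong p k x y" "x \<noteq> 0" "y \<noteq> 0" "p_integral p (1 / x)" "p_integral p (1 / y)"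
  shows "padic_cong p k (1 / x) (1 / y)"
proof -
  obtain r where "p_integral p r" "x = y + of_nat p ^ k * r"
    using assms(1) unfolding padic_cong_iff by blast
  moreover have "1 / x - 1 / y = (y - x) * (1 / x) * (1 / y)"
    using assms(2,3) by (simp add: field_simps)
  ultimately have "1 / x = 1 / y + of_nat p ^ k * (- r * (1 / x) * (1 / y))"
    by (simp add: algebra_simps)
  moreover have "p_integral p (- r * (1 / x) * (1 / y))"
    using \<open>p_integral p r\<close> assms(4,5) by (intro p_integral_mult p_integral_uminus)
  ultimately show ?thesis by (intro padic_congI)
qed

lemma padic_cong_divide_of_nat:
  assumes "padic_cong p k x y" "\<not> p dvd m"
  shows "padic_cong p k (x / of_nat m) (y / of_nat m)"
proof -
  obtain r where "p_integral p r" "x = y + of_nat p ^ k * r"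
    using assms(1) unfolding padic_cong_iff by blast
  with assms(2) show ?thesis
    by (intro padic_congI[of "r / of_nat m"]) (auto simp: add_divide_distrib)
qed

lemma padic_cong_mult_prime_power:
  "padic_cong p k x y \<Longrightarrow> padic_cong p (j + k) (of_nat p ^ j * x) (of_nat p ^ j * y)"
  unfolding padic_cong_iff by (auto simp: power_add algebra_simps)

lemma padic_cong_fermat:
  assumes "\<not> p dvd j"
  shows "padic_cong p 1 (of_nat j ^ (p - 1)) 1"
proof -
  have "[int j ^ (p - 1) = 1] (mod int p)"
    using fermat_theorem[OF p_prime assms] by (metis cong_int_iff of_nat_1 of_nat_power)
  then obtain t where "int j ^ (p - 1) - 1 = int p * t"
    unfolding cong_iff_dvd_diff by (auto elim: dvdE)
  then have "(of_nat j :: rat) ^ (p - 1) = 1 + of_nat p ^ 1 * of_int t"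
    by (metis (mono_tags, opaque_lifting) diff_eq_eq add.commute of_int_add of_int_mult
        of_int_of_nat_eq of_int_power of_int_1 power_one_right)
  then show ?thesis by (intro padic_congI[of "of_int t"]) simp_all
qed

end

section \<open>Bernoulli numbers and polynomials\<close>

definition bernoulli_fps :: "rat fps" where
  "bernoulli_fps = fps_X / (fps_exp 1 - 1)"

definition bernoulli_poly :: "nat \<Rightarrow> rat \<Rightarrow> rat" where
  "bernoulli_poly n x = fact n * (bernoulli_fps * fps_exp x) $ n"

lemma bernoulli_conv_fps: "bernoulli n = fact n * bernoulli_fps $ n"
  unfolding bernoulli_def bernoulli_fps_def ..

lemma fps_exp_1_minus_1_nonzero: "fps_exp (1::rat) - 1 \<noteq> 0"
proof
  assume "fps_exp (1::rat) - 1 = 0"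
  then have "(fps_exp (1::rat) - 1) $ 1 = 0" by simp
  then show False by simp
qed

lemma bernoulli_fps_times: "bernoulli_fps * (fps_exp 1 - 1) = fps_X"
  unfolding bernoulli_fps_def
proof (rule fps_times_divide_eq[OF fps_exp_1_minus_1_nonzero])
  have "subdegree (fps_exp (1::rat) - 1) \<le> 1" by (rule subdegree_leI) simp
  then show "subdegree (fps_exp (1::rat) - 1) \<le> subdegree (fps_X :: rat fps)" by simp
qed

lemma bernoulli_recurrence:
  "(\<Sum>k\<le>m. of_nat (Suc m choose k) * bernoulli k) = (if m = 0 then 1 else 0)"
proof -
  have "(\<Sum>k\<le>m. of_nat (Suc m choose k) * bernoulli k)
      = fact (Suc m) * (\<Sum>k\<le>m. bernoulli_fps $ k * (fps_exp 1 - 1) $ (Suc m - k))"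
    unfolding sum_distrib_left bernoulli_conv_fps
  proof (intro sum.cong refl)
    fix k assume "k \<in> {..m}"
    then have "k \<le> Suc m" "Suc m - k \<noteq> 0" by auto
    then show "of_nat (Suc m choose k) * (fact k * bernoulli_fps $ k)
        = fact (Suc m) * (bernoulli_fps $ k * (fps_exp 1 - 1) $ (Suc m - k))"
      by (simp only: binomial_fact fps_sub_nth fps_exp_nth fps_one_nth if_False) simp
  qed
  also have "(\<Sum>k\<le>m. bernoulli_fps $ k * (fps_exp 1 - 1) $ (Suc m - k))
      = (bernoulli_fps * (fps_exp 1 - 1)) $ Suc m"
    by (simp add: fps_mult_nth atLeast0AtMost sum.atMost_Suc)
  finally show ?thesis by (simp add: bernoulli_fps_times)
qed

lemma p_integral_bernoulli:
  assumes "prime p" "m + 1 < p"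
  shows "p_integral p (bernoulli m)"
  using assms(2)
proof (induction m rule: less_induct)
  case (less m)
  show ?case
  proof (cases "m = 0")
    case True
    then show ?thesis using bernoulli_recurrence[of 0] assms(1) by simp
  next
    case False
    have "(\<Sum>k<m. of_nat (Suc m choose k) * bernoulli k) + of_nat (Suc m) * bernoulli m = 0"
      using bernoulli_recurrence[of m] False by (simp add: lessThan_Suc_atMost[symmetric])
    then have "bernoulli m = - (\<Sum>k<m. of_nat (Suc m choose k) * bernoulli k) / of_nat (Suc m)"
      by (simp add: field_simps del: of_nat_Suc)
    moreover have "\<not> p dvd Suc m" using less.prems by (auto dest: dvd_imp_le)
    then have "p_integral p (- (\<Sum>k<m. of_nat (Suc m choose k) * bernoulli k) / of_nat (Suc m))"
      using assms(1) less by (intro p_integral_divide_of_nat p_integral_uminus p_integral_sum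
          p_integral_mult p_integral_of_nat less.IH) auto
    ultimately show ?thesis by simp
  qed
qed

lemma bernoulli_poly_0: "bernoulli_poly n 0 = bernoulli n"
  by (simp add: bernoulli_poly_def bernoulli_conv_fps)

lemma bernoulli_poly_expand:
  "bernoulli_poly n x = (\<Sum>k\<le>n. of_nat (n choose k) * bernoulli k * x ^ (n - k))"
  unfolding bernoulli_poly_def bernoulli_conv_fps fps_mult_nth sum_distrib_left atLeast0AtMost
  by (intro sum.cong refl) (simp add: binomial_fact)

lemma bernoulli_poly_diff:
  "bernoulli_poly (Suc m) (x + 1) - bernoulli_poly (Suc m) x = of_nat (Suc m) * x ^ m"
proof -
  have "bernoulli_fps * fps_exp (x + 1) - bernoulli_fps * fps_exp x
      = bernoulli_fps * (fps_exp 1 - 1) * fps_exp x"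
    by (simp add: fps_exp_add_mult algebra_simps)
  also have "\<dots> = fps_X * fps_exp x" by (simp add: bernoulli_fps_times)
  finally show ?thesis
    unfolding bernoulli_poly_def by (simp flip: right_diff_distrib fps_sub_nth)
qed

lemma sum_powers_bernoulli_poly:
  "of_nat (Suc m) * (\<Sum>j<N. of_nat j ^ m) = bernoulli_poly (Suc m) (of_nat N) - bernoulli (Suc m)"
proof (induction N)
  case 0
  then show ?case by (simp add: bernoulli_poly_0)
next
  case (Suc N)
  then show ?case
    using bernoulli_poly_diff[of m "of_nat N"] by (simp add: algebra_simps)
qed

lemma bernoulli_poly_half: "bernoulli_poly n (1/2) = (2 / 2 ^ n - 1) * bernoulli n"
proof -
  define H where "H = bernoulli_fps oo (fps_const (1/2) * fps_X)"
  have H_nth: "H $ n = (1/2) ^ n * bernoulli_fps $ n" for n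
    unfolding H_def by (simp add: fps_compose_linear)
  have "H * (fps_exp (1/2) - 1) = (bernoulli_fps * (fps_exp 1 - 1)) oo (fps_const (1/2) * fps_X)"
    unfolding H_def by (simp add: fps_compose_mult_distrib fps_compose_sub_distrib)
  then have H_times: "H * (fps_exp (1/2) - 1) = fps_const (1/2) * fps_X"
    by (simp add: bernoulli_fps_times)
  have exp_1: "fps_exp (1::rat) - 1 = (fps_exp (1/2) - 1) * (fps_exp (1/2) + 1)"
    by (simp add: algebra_simps flip: fps_exp_add_mult)
  have "(bernoulli_fps * fps_exp (1/2) + bernoulli_fps) * (fps_exp 1 - 1)
      = (fps_exp (1/2) + 1) * (bernoulli_fps * (fps_exp 1 - 1))"
    by (simp add: algebra_simps)
  also have "\<dots> = (fps_exp (1/2) + 1) * fps_X"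
    by (simp add: bernoulli_fps_times)
  also have "\<dots> = 2 * fps_const (1/2) * (fps_exp (1/2) + 1) * fps_X"
    by (simp add: numeral_fps_const flip: fps_const_mult)
  also have "\<dots> = 2 * (H * (fps_exp (1/2) - 1)) * (fps_exp (1/2) + 1)"
    unfolding H_times by (simp add: algebra_simps)
  also have "\<dots> = 2 * H * (fps_exp 1 - 1)"
    by (simp add: exp_1 algebra_simps)
  finally have "bernoulli_fps * fps_exp (1/2) + bernoulli_fps = 2 * H"
    using fps_exp_1_minus_1_nonzero by simp
  then have "(bernoulli_fps * fps_exp (1/2)) $ n + bernoulli_fps $ n = 2 * H $ n"
    by (metis fps_add_nth fps_mult_left_const_nth numeral_fps_const)
  then have "(bernoulli_fps * fps_exp (1/2)) $ n = (2 / 2 ^ n - 1) * bernoulli_fps $ n"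
    unfolding H_nth by (simp add: field_simps power_divide)
  then show ?thesis
    unfolding bernoulli_poly_def bernoulli_conv_fps by simp
qed

section \<open>Half harmonic sums modulo \<open>p\<close>\<close>

lemma bernoulli_poly_padic_cong:
  assumes "prime p" "n + 1 < p" "padic_cong p k x y" "p_integral p x" "p_integral p y"
  shows "padic_cong p k (bernoulli_poly n x) (bernoulli_poly n y)"
  unfolding bernoulli_poly_expand
proof (intro padic_cong_sum[OF assms(1)])
  fix j assume "j \<in> {..n}"
  then have "p_integral p (of_nat (n choose j) * bernoulli j)"
    using assms(1,2) by (intro p_integral_mult p_integral_of_nat p_integral_bernoulli) auto
  then show "padic_cong p k (of_nat (n choose j) * bernoulli j * x ^ (n - j))
      (of_nat (n choose j) * bernoulli j * y ^ (n - j))"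
    using assms by (intro padic_cong_mult padic_cong_refl padic_cong_power p_integral_power)
qed

lemma harm_padic_cong_sum_powers:
  assumes "prime p" "r + 2 \<le> p" "n < p"
  shows "padic_cong p 1 (harm r n) (\<Sum>j<Suc n. of_nat j ^ (p - 1 - r))"
proof -
  have "padic_cong p 1 (1 / of_nat j ^ r) (of_nat j ^ (p - 1 - r))" if j: "j \<in> {1..n}" for j
  proof -
    have "\<not> p dvd j" using j assms(3) by (auto dest: dvd_imp_le)
    then have "\<not> p dvd j ^ r" using assms(1) prime_dvd_power by blast
    then have "p_integral p (1 / of_nat j ^ r)"
      using p_integral_inverse_of_nat[OF assms(1)] by fastforce
    have "(of_nat j :: rat) ^ (p - 1 - r) = of_nat j ^ (p - 1) * (1 / of_nat j ^ r)"
      using j assms(2) by (simp add: power_diff)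
    moreover have "padic_cong p 1 (of_nat j ^ (p - 1) * (1 / of_nat j ^ r)) (1 * (1 / of_nat j ^ r))"
      using assms(1) \<open>\<not> p dvd j\<close> \<open>p_integral p (1 / of_nat j ^ r)\<close>
      by (intro padic_cong_mult padic_cong_fermat padic_cong_refl p_integral_power) auto
    ultimately show ?thesis
      using padic_cong_sym[OF assms(1)] by simp
  qed
  then have "padic_cong p 1 (harm r n) (\<Sum>j=1..n. of_nat j ^ (p - 1 - r))"
    unfolding harm_def by (rule padic_cong_sum[OF assms(1)])
  moreover have "(\<Sum>j<Suc n. of_nat j ^ (p - 1 - r)) = (\<Sum>j=1..n. (of_nat j :: rat) ^ (p - 1 - r))"
    using assms(2) by (simp add: lessThan_Suc_atMost atLeast0AtMost[symmetric] sum.atLeast_Suc_atMost)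
  ultimately show ?thesis by simp
qed

lemma padic_cong_two_divide_power:
  assumes "prime p" "p \<noteq> 2" "r < p"
  shows "padic_cong p 1 (2 / 2 ^ (p - r)) (2 ^ r)"
proof -
  have "\<not> p dvd 2" using assms(1,2) primes_dvd_imp_eq two_is_prime_nat by blast
  then have "\<not> p dvd 2 ^ (p - 1)" using assms(1) prime_dvd_power by blast
  then have "p_integral p (1 / 2 ^ (p - 1))"
    using p_integral_inverse_of_nat[OF assms(1)] by (metis of_nat_numeral of_nat_power)
  then have "padic_cong p 1 (1 / 2 ^ (p - 1)) 1"
    using padic_cong_inverse[OF assms(1) padic_cong_fermat[OF assms(1) \<open>\<not> p dvd 2\<close>]]
      p_integral_1[OF assms(1)] by simp
  then have "padic_cong p 1 (2 ^ r * (1 / 2 ^ (p - 1))) (2 ^ r * 1)"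
    using assms(1) by (intro padic_cong_mult_left) auto
  moreover have "(2::rat) ^ (p - r) * 2 ^ r = 2 * 2 ^ (p - 1)"
    using assms(3) by (simp flip: power_add power_Suc)
  then have "(2::rat) / 2 ^ (p - r) = 2 ^ r * (1 / 2 ^ (p - 1))"
    by (simp add: field_simps)
  ultimately show ?thesis by simp
qed

lemma padic_cong_bernoulli_half_factor:
  assumes "prime p" "p \<noteq> 2" "0 < r" "r < p"
  shows "padic_cong p 1 ((2 / 2 ^ (p - r) - 2) / of_nat (p - r)) ((2 - 2 ^ r) / of_nat r)"
proof -
  have "padic_cong p 1 (2 / 2 ^ (p - r) - 2) (2 ^ r - 2)"
    using padic_cong_diff[OF assms(1) padic_cong_two_divide_power[OF assms(1,2,4)]
        padic_cong_refl[OF assms(1)]] .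
  then have numerator: "padic_cong p 1 (2 ^ r - 2) (2 / 2 ^ (p - r) - 2)"
    by (rule padic_cong_sym[OF assms(1)])
  have "\<not> p dvd r" "\<not> p dvd p - r" using assms(3,4) by (auto dest: dvd_imp_le)
  then have "p_integral p (1 / of_nat (p - r))" "p_integral p (1 / - of_nat r)"
    using assms(1) by (auto intro: p_integral_inverse_of_nat)
  moreover have "padic_cong p 1 (- of_nat r) (of_nat (p - r))"
    using assms(4) p_integral_uminus[OF assms(1) p_integral_1[OF assms(1)]]
    by (intro padic_congI[OF assms(1), of "- 1"]) (simp_all add: of_nat_diff)
  ultimately have denominator: "padic_cong p 1 (1 / - of_nat r) (1 / of_nat (p - r))"
    using assms(3,4) by (intro padic_cong_inverse[OF assms(1)]) auto
  have "p_integral p (2 ^ r - 2)"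
    using assms(1) by (intro p_integral_diff p_integral_power p_integral_numeral)
  then have "padic_cong p 1 ((2 ^ r - 2) * (1 / - of_nat r))
      ((2 / 2 ^ (p - r) - 2) * (1 / of_nat (p - r)))"
    using padic_cong_mult[OF assms(1) numerator denominator] \<open>p_integral p (1 / of_nat (p - r))\<close>
    by blast
  moreover have "(2 ^ r - 2) * (1 / - of_nat r) = ((2 - 2 ^ r) / of_nat r :: rat)"
    by (metis divide_minus_left minus_diff_eq mult_1_right times_divide_eq_right divide_minus_right)
  ultimately show ?thesis
    using padic_cong_sym[OF assms(1)] by simp
qed

lemma harm_half_padic_cong_bernoulli:
  assumes "prime p" "2 \<le> r" "r + 2 \<le> p"
  shows "padic_cong p 1 (harm r ((p - 1) div 2)) ((2 - 2 ^ r) / of_nat r * bernoulli (p - r))"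
proof -
  note padic_cong_trans[OF assms(1), trans]
  define n where "n = (p - 1) div 2"
  define m where "m = p - 1 - r"
  have "odd p" using assms by (intro prime_odd_nat) auto
  then have p: "p = 2 * n + 1" unfolding n_def by presburger
  have M: "p - r = Suc m" unfolding m_def using assms(3) by simp
  have "\<not> p dvd 2" "\<not> p dvd p - r" using assms(2,3) by (auto dest: dvd_imp_le)
  have "p_integral p (1 / 2)"
    using p_integral_inverse_of_nat[OF assms(1) \<open>\<not> p dvd 2\<close>] by simp
  then have "padic_cong p 1 (of_nat (Suc n)) (1 / 2)"
    using p by (intro padic_congI[OF assms(1), of "1 / 2"]) (simp_all add: field_simps)
  then have half: "padic_cong p 1
      (bernoulli_poly (p - r) (of_nat (Suc n))) (bernoulli_poly (p - r) (1 / 2))"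
    using assms \<open>p_integral p (1 / 2)\<close> by (intro bernoulli_poly_padic_cong) auto
  have "padic_cong p 1 (harm r n) (\<Sum>j<Suc n. of_nat j ^ m)"
    unfolding m_def using assms p by (intro harm_padic_cong_sum_powers) auto
  also have "(\<Sum>j<Suc n. of_nat j ^ m)
      = (bernoulli_poly (p - r) (of_nat (Suc n)) - bernoulli (p - r)) / of_nat (p - r)"
    unfolding M sum_powers_bernoulli_poly[symmetric] by (simp del: of_nat_Suc)
  also have "padic_cong p 1 \<dots> ((bernoulli_poly (p - r) (1 / 2) - bernoulli (p - r)) / of_nat (p - r))"
    using \<open>\<not> p dvd p - r\<close> half
    by (intro padic_cong_divide_of_nat[OF assms(1)] padic_cong_diff[OF assms(1)]
        padic_cong_refl[OF assms(1)])
  also have "\<dots> = bernoulli (p - r) * ((2 / 2 ^ (p - r) - 2) / of_nat (p - r))"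
    unfolding bernoulli_poly_half by (simp add: algebra_simps diff_divide_distrib)
  also have "padic_cong p 1 \<dots> (bernoulli (p - r) * ((2 - 2 ^ r) / of_nat r))"
    using assms by (intro padic_cong_mult_left p_integral_bernoulli padic_cong_bernoulli_half_factor) auto
  finally show ?thesis unfolding n_def by (simp add: mult.commute)
qed

section \<open>Expanding the cubic half harmonic sum in powers of \<open>p\<close>\<close>

lemma sum_reflect:
  fixes f :: "nat \<Rightarrow> 'a::comm_monoid_add"
  shows "(\<Sum>j=1..2*n. f j) = (\<Sum>i=1..n. f i + f (2*n + 1 - i))"
proof -
  have "{1..2*n} = {1..n} \<union> {n+1..2*n}" by auto
  then have "(\<Sum>j=1..2*n. f j) = (\<Sum>j=1..n. f j) + (\<Sum>j=n+1..2*n. f j)"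
    by (simp add: sum.union_disjoint)
  also have "(\<Sum>j=n+1..2*n. f j) = (\<Sum>i=1..n. f (2*n + 1 - i))"
    by (rule sum.reindex_bij_witness[of _ "\<lambda>i. 2*n + 1 - i" "\<lambda>j. 2*n + 1 - j"]) auto
  finally show ?thesis by (simp add: sum.distrib)
qed

lemma sum_even_odd_reflect:
  fixes f :: "nat \<Rightarrow> 'a::comm_monoid_add"
  shows "(\<Sum>j=1..2*n. f j) = (\<Sum>i=1..n. f (2*i) + f (2*n + 1 - 2*i))"
proof -
  have "(\<Sum>j=1..2*n. f j) = (\<Sum>i=1..n. f (2*i)) + (\<Sum>i=1..n. f (2*i - 1))"
    by (induction n) (simp_all add: sum.cl_ivl_Suc algebra_simps)
  also have "(\<Sum>i=1..n. f (2*i - 1)) = (\<Sum>i=1..n. f (2*n + 1 - 2*i))"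
    by (rule sum.reindex_bij_witness[of _ "\<lambda>i. n + 1 - i" "\<lambda>i. n + 1 - i"]) (auto simp: algebra_simps)
  finally show ?thesis by (simp add: sum.distrib)
qed

lemma harm_reflect:
  "harm r (2*n) = (\<Sum>i=1..n. 1 / of_nat i ^ r + 1 / (of_nat (2*n + 1) - of_nat i) ^ r)"
  unfolding harm_def sum_reflect[of _ n] by (intro sum.cong refl) (simp add: of_nat_diff)

lemma harm_reflect_even:
  "harm r (2*n) = (\<Sum>i=1..n. 1 / (2 * of_nat i) ^ r + 1 / (of_nat (2*n + 1) - 2 * of_nat i) ^ r)"
  unfolding harm_def sum_even_odd_reflect[of _ n] by (intro sum.cong refl) (simp add: of_nat_diff)

definition harm3_remainder :: "rat \<Rightarrow> rat \<Rightarrow> rat" where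
  "harm3_remainder P x =
     (1920*x^7 - 7060*P*x^6 + 11295*P^2*x^5 - 10167*P^3*x^4 + 5550*P^4*x^3
        - 1834*P^5*x^2 + 339*P^6*x - 27*P^7) / (20 * x^5 * (P - x)^4 * (P - 2*x)^4)"

lemma harm3_remainder_identity:
  fixes P x :: rat
  assumes "x \<noteq> 0" "P \<noteq> 0" "P - x \<noteq> 0" "P - 2*x \<noteq> 0"
  shows "1/x^3 - 27/20 * P^2 * (1/x^5)
         + (2 * (1/x + 1/(P - x)) - 8 * (1/(2*x) + 1/(P - 2*x))) / P^2
         + 4/5 * P * ((1/x^4 + 1/(P - x)^4) - (1/(2*x)^4 + 1/(P - 2*x)^4))
       = P^3 * harm3_remainder P x"
proof -
  define a where "a = P - x"
  define c where "c = P - 2*x"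
  have "a \<noteq> 0" "c \<noteq> 0" using assms unfolding a_def c_def by auto
  \<comment> \<open>HOL-Algebra, imported via Residues, shadows the method name \<open>algebra\<close>.\<close>
  with assms(1,2) have "(2 * (1/x + 1/a) - 8 * (1/(2*x) + 1/c)) / P^2 = - 2 / (x * a * c)"
    by (simp add: field_simps) (unfold a_def c_def, Groebner_Basis.algebra)
  moreover have "1/x^3 - 27/20 * P^2 * (1/x^5) - 2 / (x * a * c)
         + 4/5 * P * ((1/x^4 + 1/a^4) - (1/(2*x)^4 + 1/c^4))
       = P^3 * harm3_remainder P x"
    unfolding harm3_remainder_def a_def[symmetric] c_def[symmetric]
    using assms(1) \<open>a \<noteq> 0\<close> \<open>c \<noteq> 0\<close>
    by (simp add: field_simps) (unfold a_def c_def, Groebner_Basis.algebra)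
  ultimately show ?thesis unfolding a_def c_def by simp
qed

lemma harm3_expansion:
  fixes n :: nat
  defines "P \<equiv> of_nat (2*n + 1) :: rat"
  shows "harm 3 n = 6 * harm 1 (2*n) / P^2 + 27/20 * P^2 * harm 5 n
           + P^3 * (\<Sum>i=1..n. harm3_remainder P (of_nat i))"
proof -
  have reflect: "harm r (2*n) = (\<Sum>i=1..n. 1 / of_nat i ^ r + 1 / (P - of_nat i) ^ r)"
    and reflect_even: "harm r (2*n) = (\<Sum>i=1..n. 1 / (2 * of_nat i) ^ r + 1 / (P - 2 * of_nat i) ^ r)"
    for r
    unfolding P_def by (rule harm_reflect, rule harm_reflect_even)
  have "P^3 * (\<Sum>i=1..n. harm3_remainder P (of_nat i))
      = (\<Sum>i=1..n. 1/of_nat i^3 - 27/20 * P^2 * (1/of_nat i^5)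
         + (2 * (1/of_nat i + 1/(P - of_nat i)) - 8 * (1/(2*of_nat i) + 1/(P - 2*of_nat i))) / P^2
         + 4/5 * P * ((1/of_nat i^4 + 1/(P - of_nat i)^4)
                     - (1/(2*of_nat i)^4 + 1/(P - 2*of_nat i)^4)))"
    unfolding sum_distrib_left
    by (intro sum.cong refl harm3_remainder_identity[symmetric]) (auto simp: P_def)
  also have "\<dots> = (\<Sum>i=1..n. 1/of_nat i^3) - 27/20 * P^2 * (\<Sum>i=1..n. 1/of_nat i^5)
      + (2 * (\<Sum>i=1..n. 1/of_nat i + 1/(P - of_nat i))
         - 8 * (\<Sum>i=1..n. 1/(2*of_nat i) + 1/(P - 2*of_nat i))) / P^2
      + 4/5 * P * ((\<Sum>i=1..n. 1/of_nat i^4 + 1/(P - of_nat i)^4)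
                  - (\<Sum>i=1..n. 1/(2*of_nat i)^4 + 1/(P - 2*of_nat i)^4))"
    by (simp only: sum.distrib sum_subtractf sum_divide_distrib[symmetric] sum_distrib_left[symmetric])
  also have "\<dots> = harm 3 n - 27/20 * P^2 * harm 5 n - 6 * harm 1 (2*n) / P^2"
    using reflect[of 1] reflect_even[of 1] reflect[of 4] reflect_even[of 4] by (simp add: harm_def)
  finally show ?thesis by simp
qed

lemma prime_not_dvd_20:
  fixes p :: nat
  assumes "prime p" "5 < p"
  shows "\<not> p dvd 20"
proof -
  have "\<not> p dvd 2" "\<not> p dvd 5" using assms(2) by (auto dest: dvd_imp_le)
  then show ?thesis
    using prime_dvd_mult_iff[OF assms(1), of 2 10] prime_dvd_mult_iff[OF assms(1), of 2 5] by simp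
qed

lemma p_integral_harm3_remainder:
  assumes "prime p" "5 < p" "0 < i" "2 * i < p"
  shows "p_integral p (harm3_remainder (of_nat p) (of_nat i))"
proof -
  define N :: int where "N = 1920*int i^7 - 7060*int p*int i^6 + 11295*int p^2*int i^5
      - 10167*int p^3*int i^4 + 5550*int p^4*int i^3 - 1834*int p^5*int i^2 + 339*int p^6*int i
      - 27*int p^7"
  define D where "D = 20 * i^5 * (p - i)^4 * (p - 2*i)^4"
  have "harm3_remainder (of_nat p) (of_nat i) = of_int N / of_nat D"
    unfolding harm3_remainder_def N_def D_def using assms(4) by (simp add: of_nat_diff)
  moreover have "\<not> p dvd D"
  proof -
    have "\<not> p dvd i" "\<not> p dvd p - i" "\<not> p dvd p - 2*i"
      using assms(3,4) by (auto dest: dvd_imp_le)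
    with prime_not_dvd_20[OF assms(1,2)] show ?thesis
      unfolding D_def using assms(1) by (simp add: prime_dvd_mult_iff prime_dvd_power_iff)
  qed
  ultimately show ?thesis
    using assms(1) by (simp add: p_integral_divide_of_nat)
qed

lemma harm3_half_padic_cong_harm5:
  assumes "prime p" "5 < p"
  shows "padic_cong p 3 (harm 3 ((p - 1) div 2))
           (6 * harm 1 (p - 1) / of_nat p ^ 2 + 27/20 * of_nat p ^ 2 * harm 5 ((p - 1) div 2))"
proof -
  define n where "n = (p - 1) div 2"
  have "odd p" using assms by (intro prime_odd_nat) auto
  then have p: "p = 2 * n + 1" unfolding n_def by presburger
  have "p_integral p (\<Sum>i=1..n. harm3_remainder (of_nat p) (of_nat i))"
    using assms p by (intro p_integral_sum p_integral_harm3_remainder) auto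
  then show ?thesis
    using harm3_expansion[of n] p unfolding n_def[symmetric]
    by (intro padic_congI[OF assms(1)]) simp_all
qed

theorem lemma3p1:
  fixes p :: nat
  assumes "prime p" and "p > 7"
  shows "padic_cong p 3 (harm 3 ((p - 1) div 2))
           (6 * harm 1 (p - 1) / (of_nat p)^2 - 81/10 * (of_nat p)^2 * bernoulli (p - 5))"
proof -
  note padic_cong_trans[OF assms(1), trans]
  define n where "n = (p - 1) div 2"
  define P where "P = (of_nat p :: rat)"
  have "padic_cong p 1 (harm 5 n) (-6 * bernoulli (p - 5))"
    using harm_half_padic_cong_bernoulli[OF assms(1), of 5] assms(2) unfolding n_def by simp
  then have harm5: "padic_cong p (2 + 1) (P^2 * harm 5 n) (P^2 * (-6 * bernoulli (p - 5)))"
    unfolding P_def by (rule padic_cong_mult_prime_power[OF assms(1)])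
  have coeff: "p_integral p (27/20)"
    using p_integral_divide_of_nat[OF assms(1) _ prime_not_dvd_20[OF assms(1)]] assms(2)
    by (simp add: assms(1))
  have "padic_cong p 3 (harm 3 n) (6 * harm 1 (p - 1) / P^2 + 27/20 * P^2 * harm 5 n)"
    using harm3_half_padic_cong_harm5[OF assms(1)] assms(2) unfolding n_def P_def by simp
  also have "padic_cong p 3 \<dots> (6 * harm 1 (p - 1) / P^2 + 27/20 * P^2 * (-6 * bernoulli (p - 5)))"
    using padic_cong_mult_left[OF assms(1) coeff harm5]
    by (intro padic_cong_add[OF assms(1)] padic_cong_refl[OF assms(1)]) (simp add: mult.assoc)
  also have "\<dots> = 6 * harm 1 (p - 1) / P^2 - 81/10 * P^2 * bernoulli (p - 5)"
    by simp
  finally show ?thesis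
    unfolding n_def P_def .
qed

end
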